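(* Let $\lambda>0$. Consider $\mathcal{UNB}(r,p)$ distributions with $r\to\infty$ and $p=p(r)\in(0,1)$ such that $P:=q/p\to0$ and $rP\to\lambda$, where $q=1-p$. Then for each fixed $x\in\{0,1,2,\dots\}$ the $\mathcal{UNB}(r,p)$ probability of $x$ converges to $$\frac{\lambda^{x}e^{-\lambda}}{(x+1)!}\,{}_1F_1(1;x+2;\lambda),$$ which is the probability mass function of the uniform-Poisson distribution $\mathcal{UP}(\lambda)$.
   Context: $\mathcal{UNB}(r,p)$ ($r>0$, $0<p<1$) is the law of $X$ where $N$ is negative binomial with $P(N=n)=\binom{r+n-1}{n}p^rq^n$, $n\ge0$, and $X\mid N=n$ is uniform on $\{0,1,\dots,n\}$; its pmf is $\frac{q^xp^r}{1+x}\binom{r+x-1}{x}{}_2F_1(1,r+x;2+x;q)$, with $\binom{r+x-1}{x}=\frac{\Gamma(r+x)}{x!\Gamma(r)}$ and ${}_2F_1(a,b;c;z)=\sum_{n\ge0}\frac{(a)_n(b)_n}{(c)_n}\frac{z^n}{n!}$. The confluent hypergeometric function is ${}_1F_1(a;c;z)=\sum_{n\ge0}\frac{(a)_n}{(c)_n}\frac{z^n}{n!}$; here $(s)_n=s(s+1)\cdots(s+n-1)$, $(s)_0=1$. The uniform-Poisson law $\mathcal{UP}(\lambda)$ is that of $X$ where $N\sim$ Poisson$(\lambda)$ and $X\mid N=n$ is uniform on $\{0,\dots,n\}$. *)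

theory Defs
  imports "HOL-Analysis.Analysis"
begin

text \<open>Negative binomial pmf: P(N=n) = binom(r+n-1,n) p^r q^n with
  binom(r+n-1,n) = Gamma(r+n)/(n! Gamma(r)).\<close>
definition negbin_pmf :: "real \<Rightarrow> real \<Rightarrow> nat \<Rightarrow> real" where
  "negbin_pmf r p n = Gamma (r + real n) / (fact n * Gamma r) * p powr r * (1 - p) ^ n"

text \<open>UNB(r,p): X | N=n uniform on {0..n}, so P(X=x) = sum over n >= x of P(N=n)/(n+1).\<close>
definition unb_pmf :: "real \<Rightarrow> real \<Rightarrow> nat \<Rightarrow> real" where
  "unb_pmf r p x = (\<Sum>n. if x \<le> n then negbin_pmf r p n / real (n + 1) else 0)"

definition poisson_pmf_real :: "real \<Rightarrow> nat \<Rightarrow> real" where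
  "poisson_pmf_real l n = exp (- l) * l ^ n / fact n"

text \<open>UP(lambda): X | N=n uniform on {0..n}, N ~ Poisson(lambda).\<close>
definition up_pmf :: "real \<Rightarrow> nat \<Rightarrow> real" where
  "up_pmf l x = (\<Sum>n. if x \<le> n then poisson_pmf_real l n / real (n + 1) else 0)"

definition hyp1F1 :: "real \<Rightarrow> real \<Rightarrow> real \<Rightarrow> real" where
  "hyp1F1 a c z = (\<Sum>n. pochhammer a n / pochhammer c n * z ^ n / fact n)"

end

theory Submission
  imports Defs
begin

(* The negative binomial weights converge pointwise to the Poisson weights:
   (r)_n q^n -> lambda^n because r q -> lambda, and p^r -> e^(-lambda) because
   -r q/p <= r ln p <= -r q.  Since all these weights are probability mass functions,
   pointwise convergence upgrades (Scheffe) to convergence of the expectation of any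
   bounded function, in particular of n |-> [x <= n]/(n+1), which gives UNB(r,p){x}
   in the limit UP(lambda){x}.  The closed form follows by shifting n = x + k in the
   series for UP(lambda){x}, since (x+2)_k = (x+1+k)!/(x+1)!. *)

lemma abs_suminf_mult_minus_sum_le:
  fixes a c :: "nat \<Rightarrow> real"
  assumes a: "summable a" "\<And>n. 0 \<le> a n" and c: "\<And>n. \<bar>c n\<bar> \<le> B"
  shows "\<bar>(\<Sum>n. c n * a n) - (\<Sum>n<M. c n * a n)\<bar> \<le> B * ((\<Sum>n. a n) - (\<Sum>n<M. a n))"
proof -
  have bound: "\<bar>c n * a n\<bar> \<le> B * a n" for n
    using c[of n] a(2)[of n] by (simp add: abs_mult mult_right_mono)
  have ca: "summable (\<lambda>n. c n * a n)"
    by (rule summable_comparison_test'[OF summable_mult[OF a(1)]]) (use bound in simp)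
  have "\<bar>(\<Sum>n. c n * a n) - (\<Sum>n<M. c n * a n)\<bar> = \<bar>\<Sum>n. c (n + M) * a (n + M)\<bar>"
    using suminf_minus_initial_segment[OF ca, of M] by simp
  also have "\<dots> \<le> (\<Sum>n. B * a (n + M))"
    using norm_suminf_le[of "\<lambda>n. c (n + M) * a (n + M)"] bound a(1) by (simp add: summable_mult)
  also have "\<dots> = B * ((\<Sum>n. a n) - (\<Sum>n<M. a n))"
    using a(1) by (simp add: suminf_mult suminf_minus_initial_segment)
  finally show ?thesis .
qed

lemma abs_suminf_mult_diff_le:
  fixes a b c :: "nat \<Rightarrow> real"
  assumes "a sums 1" "b sums 1" "\<And>n. 0 \<le> a n" "\<And>n. 0 \<le> b n" "\<And>n. \<bar>c n\<bar> \<le> B"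
  shows "\<bar>(\<Sum>n. c n * a n) - (\<Sum>n. c n * b n)\<bar>
    \<le> B * (1 - (\<Sum>n<M. a n)) + \<bar>(\<Sum>n<M. c n * a n) - (\<Sum>n<M. c n * b n)\<bar> + B * (1 - (\<Sum>n<M. b n))"
proof -
  have "summable a" "summable b" "(\<Sum>n. a n) = 1" "(\<Sum>n. b n) = 1"
    using assms(1,2) by (simp_all add: sums_iff)
  then show ?thesis
    using abs_suminf_mult_minus_sum_le[of a c B M] abs_suminf_mult_minus_sum_le[of b c B M] assms(3-5)
    by simp
qed

lemma tendsto_bounded_weighted_suminf:
  fixes a :: "'b \<Rightarrow> nat \<Rightarrow> real" and b c :: "nat \<Rightarrow> real"
  assumes a_nonneg: "eventually (\<lambda>r. \<forall>n. 0 \<le> a r n) F"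
    and a_sums: "eventually (\<lambda>r. a r sums 1) F"
    and b_sums: "b sums 1"
    and a_b: "\<And>n. ((\<lambda>r. a r n) \<longlongrightarrow> b n) F"
    and c: "\<And>n. \<bar>c n\<bar> \<le> B"
  shows "((\<lambda>r. \<Sum>n. c n * a r n) \<longlongrightarrow> (\<Sum>n. c n * b n)) F"
proof (cases "F = bot")
  case False
  have b_nonneg: "0 \<le> b n" for n
    by (rule tendsto_lowerbound[OF a_b _ False]) (use a_nonneg in \<open>auto elim: eventually_mono\<close>)
  have "0 \<le> B" using c[of 0] by linarith
  show ?thesis
  proof (rule tendstoI)
    fix e :: real assume "e > 0"
    define \<epsilon> where "\<epsilon> = e / (3 * B + 1)"
    have "\<epsilon> > 0" and "e = (3 * B + 1) * \<epsilon>"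
      using \<open>e > 0\<close> \<open>0 \<le> B\<close> by (simp_all add: \<epsilon>_def)
    then have e_eq: "e = 2 * (B * \<epsilon>) + \<epsilon> + B * \<epsilon>"
      by (simp add: algebra_simps)
    have "eventually (\<lambda>M. dist (\<Sum>n<M. b n) 1 < \<epsilon>) sequentially"
      using b_sums \<open>\<epsilon> > 0\<close> unfolding sums_def by (rule tendstoD)
    then obtain M where "\<forall>n\<ge>M. dist (\<Sum>n<n. b n) 1 < \<epsilon>"
      by (auto simp: eventually_sequentially)
    then have M: "1 - (\<Sum>n<M. b n) < \<epsilon>"
      by (auto simp: dist_real_def)
    then have tail_b: "B * (1 - (\<Sum>n<M. b n)) \<le> B * \<epsilon>"
      using \<open>0 \<le> B\<close> by (intro mult_left_mono) auto
    have "eventually (\<lambda>r. \<bar>(\<Sum>n<M. a r n) - (\<Sum>n<M. b n)\<bar> < \<epsilon>) F"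
      using tendstoD[OF tendsto_sum[OF a_b] \<open>\<epsilon> > 0\<close>] by (simp add: dist_real_def)
    moreover have "eventually (\<lambda>r. \<bar>(\<Sum>n<M. c n * a r n) - (\<Sum>n<M. c n * b n)\<bar> < \<epsilon>) F"
      using tendstoD[OF tendsto_sum[OF tendsto_mult[OF tendsto_const a_b]] \<open>\<epsilon> > 0\<close>]
      by (simp add: dist_real_def)
    ultimately show "eventually (\<lambda>r. dist (\<Sum>n. c n * a r n) (\<Sum>n. c n * b n) < e) F"
      using a_nonneg a_sums
    proof eventually_elim
      case (elim r)
      \<comment> \<open>Since \<open>a r\<close> and \<open>b\<close> both have mass 1, closeness of their first \<open>M\<close> weights
        makes the tail of \<open>a r\<close> small as well.\<close>
      have "1 - (\<Sum>n<M. a r n) \<le> 2 * \<epsilon>"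
        using elim(1) M by linarith
      then have tail_a: "B * (1 - (\<Sum>n<M. a r n)) \<le> 2 * (B * \<epsilon>)"
        using mult_left_mono[OF _ \<open>0 \<le> B\<close>] by fastforce
      have "\<bar>(\<Sum>n. c n * a r n) - (\<Sum>n. c n * b n)\<bar>
        \<le> B * (1 - (\<Sum>n<M. a r n)) + \<bar>(\<Sum>n<M. c n * a r n) - (\<Sum>n<M. c n * b n)\<bar> + B * (1 - (\<Sum>n<M. b n))"
        using elim(3,4) b_sums b_nonneg c by (intro abs_suminf_mult_diff_le) auto
      then show ?case
        using tail_a tail_b elim(2) unfolding e_eq dist_real_def by linarith
    qed
  qed
qed simp

lemma negbin_pmf_eq_pochhammer:
  assumes "r > 0"
  shows "negbin_pmf r p n = pochhammer r n * (1 - p) ^ n / fact n * p powr r"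
proof -
  have "r \<notin> \<int>\<^sub>\<le>\<^sub>0"
    using assms by (auto elim!: nonpos_Ints_cases)
  then have "pochhammer r n = Gamma (r + real n) / Gamma r"
    by (simp add: pochhammer_Gamma)
  then show ?thesis
    unfolding negbin_pmf_def by (simp add: field_simps)
qed

lemma negbin_pmf_nonneg:
  assumes "r > 0" "0 < p" "p < 1"
  shows "0 \<le> negbin_pmf r p n"
  using assms by (simp add: negbin_pmf_eq_pochhammer pochhammer_pos less_imp_le)

lemma negbin_pmf_sums:
  assumes "r > 0" "0 < p" "p < 1"
  shows "negbin_pmf r p sums 1"
proof -
  have "(\<lambda>n. ((- r) gchoose n) * (- (1 - p)) ^ n) sums (1 + (- (1 - p))) powr (- r)"
    by (rule gen_binomial_real) (use assms in auto)
  moreover have "((- r) gchoose n) * (- (1 - p)) ^ n = pochhammer r n * (1 - p) ^ n / fact n" for n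
    by (simp add: gbinomial_pochhammer power_mult_distrib[symmetric])
  ultimately have "(\<lambda>n. pochhammer r n * (1 - p) ^ n / fact n * p powr r) sums (p powr (- r) * p powr r)"
    by (intro sums_mult2) simp
  moreover have "p powr (- r) * p powr r = 1"
    using assms by (simp add: powr_add[symmetric])
  moreover have "negbin_pmf r p = (\<lambda>n. pochhammer r n * (1 - p) ^ n / fact n * p powr r)"
    using negbin_pmf_eq_pochhammer[OF assms(1)] by (rule ext)
  ultimately show ?thesis
    by simp
qed

lemma poisson_pmf_real_sums: "poisson_pmf_real l sums 1"
proof -
  have "(\<lambda>n. exp (- l) * (l ^ n /\<^sub>R fact n)) sums (exp (- l) * exp l)"
    by (rule sums_mult[OF exp_converges])
  then show ?thesis
    unfolding poisson_pmf_real_def by (simp add: exp_minus field_simps)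
qed

lemma tendsto_one_if_odds_tendsto_zero:
  fixes p :: "'a \<Rightarrow> real"
  assumes "eventually (\<lambda>r. 0 < p r) F" and "((\<lambda>r. (1 - p r) / p r) \<longlongrightarrow> 0) F"
  shows "(p \<longlongrightarrow> 1) F"
proof -
  have "((\<lambda>r. 1 / (1 + (1 - p r) / p r)) \<longlongrightarrow> 1 / (1 + 0)) F"
    by (intro tendsto_intros assms(2)) simp
  moreover have "eventually (\<lambda>r. 1 / (1 + (1 - p r) / p r) = p r) F"
    using assms(1) by eventually_elim (simp add: field_simps)
  ultimately show ?thesis
    by (simp add: tendsto_cong)
qed

lemma powr_tendsto_exp_neg:
  fixes p :: "real \<Rightarrow> real"
  assumes p: "\<forall>r>0. 0 < p r \<and> p r < 1"
    and odds: "((\<lambda>r. r * ((1 - p r) / p r)) \<longlongrightarrow> l) at_top"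
    and q: "((\<lambda>r. r * (1 - p r)) \<longlongrightarrow> l) at_top"
  shows "((\<lambda>r. p r powr r) \<longlongrightarrow> exp (- l)) at_top"
proof -
  have lower: "- (r * ((1 - p r) / p r)) \<le> r * ln (p r)"
    and upper: "r * ln (p r) \<le> - (r * (1 - p r))"
    and powr: "exp (r * ln (p r)) = p r powr r" if "r > 0" for r
  proof -
    have pr: "0 < p r" "p r < 1"
      using p that by auto
    have "ln (1 / p r) \<le> 1 / p r - 1" and "ln (p r) \<le> p r - 1"
      using pr by (intro ln_le_minus_one; simp)+
    then have "- ln (p r) \<le> (1 - p r) / p r" and "ln (p r) \<le> - (1 - p r)"
      using pr by (simp_all add: ln_div field_simps)
    then show "- (r * ((1 - p r) / p r)) \<le> r * ln (p r)" and "r * ln (p r) \<le> - (r * (1 - p r))"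
      using mult_left_mono[of _ _ r] that by (fastforce simp: algebra_simps)+
    show "exp (r * ln (p r)) = p r powr r"
      using pr by (simp add: powr_def mult.commute)
  qed
  have "((\<lambda>r. r * ln (p r)) \<longlongrightarrow> - l) at_top"
    using eventually_mono[OF eventually_gt_at_top lower] eventually_mono[OF eventually_gt_at_top upper]
      tendsto_minus[OF odds] tendsto_minus[OF q]
    by (rule tendsto_sandwich)
  then have "((\<lambda>r. exp (r * ln (p r))) \<longlongrightarrow> exp (- l)) at_top"
    by (rule tendsto_exp)
  moreover have "eventually (\<lambda>r. exp (r * ln (p r)) = p r powr r) at_top"
    using eventually_gt_at_top[of "0::real"] by eventually_elim (rule powr)
  ultimately show ?thesis
    by (simp add: tendsto_cong)
qed

lemma pochhammer_mult_power_tendsto: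
  fixes q :: "real \<Rightarrow> real"
  assumes "(q \<longlongrightarrow> 0) at_top" and "((\<lambda>r. r * q r) \<longlongrightarrow> l) at_top"
  shows "((\<lambda>r. pochhammer r n * q r ^ n) \<longlongrightarrow> l ^ n) at_top"
proof -
  have "((\<lambda>r. r * q r + real i * q r) \<longlongrightarrow> l + real i * 0) at_top" for i
    by (intro tendsto_intros assms)
  then have "((\<lambda>r. \<Prod>i<n. (r + real i) * q r) \<longlongrightarrow> (\<Prod>i<n. l)) at_top"
    by (intro tendsto_prod) (simp add: algebra_simps)
  moreover have "(\<Prod>i<n. (r + real i) * q r) = pochhammer r n * q r ^ n" for r
    by (simp add: pochhammer_prod prod.distrib atLeast0LessThan)
  ultimately show ?thesis
    by simp
qed

lemma negbin_pmf_tendsto_poisson_pmf_real: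
  fixes p :: "real \<Rightarrow> real"
  assumes p: "\<forall>r>0. 0 < p r \<and> p r < 1"
    and odds_zero: "((\<lambda>r. (1 - p r) / p r) \<longlongrightarrow> 0) at_top"
    and odds: "((\<lambda>r. r * ((1 - p r) / p r)) \<longlongrightarrow> l) at_top"
  shows "((\<lambda>r. negbin_pmf r (p r) n) \<longlongrightarrow> poisson_pmf_real l n) at_top"
proof -
  have pos: "eventually (\<lambda>r::real. 0 < r) at_top"
    by (rule eventually_gt_at_top)
  have "eventually (\<lambda>r. 0 < p r) at_top"
    using pos by eventually_elim (use p in auto)
  then have p_one: "(p \<longlongrightarrow> 1) at_top"
    using odds_zero by (rule tendsto_one_if_odds_tendsto_zero)
  have q_zero: "((\<lambda>r. 1 - p r) \<longlongrightarrow> 0) at_top"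
    using tendsto_diff[OF tendsto_const[of 1] p_one] by simp
  have "((\<lambda>r. r * ((1 - p r) / p r) * p r) \<longlongrightarrow> l * 1) at_top"
    by (intro tendsto_intros odds p_one)
  moreover have "eventually (\<lambda>r. r * ((1 - p r) / p r) * p r = r * (1 - p r)) at_top"
    using pos by eventually_elim (use p in auto)
  ultimately have q: "((\<lambda>r. r * (1 - p r)) \<longlongrightarrow> l) at_top"
    by (simp add: tendsto_cong)
  have "((\<lambda>r. pochhammer r n * (1 - p r) ^ n / fact n * p r powr r) \<longlongrightarrow> l ^ n / fact n * exp (- l)) at_top"
    by (intro tendsto_intros pochhammer_mult_power_tendsto powr_tendsto_exp_neg q_zero q odds p) simp
  moreover have "eventually (\<lambda>r. pochhammer r n * (1 - p r) ^ n / fact n * p r powr r = negbin_pmf r (p r) n) at_top"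
    using pos by eventually_elim (simp add: negbin_pmf_eq_pochhammer)
  ultimately show ?thesis
    by (simp add: tendsto_cong poisson_pmf_real_def field_simps)
qed

lemma pochhammer_of_nat_plus_one_mult_fact: "pochhammer (real m + 1) k * fact m = fact (m + k)"
proof (induction k)
  case (Suc k)
  have "pochhammer (real m + 1) (Suc k) * fact m = pochhammer (real m + 1) k * fact m * (real (m + k) + 1)"
    by (simp add: pochhammer_Suc algebra_simps)
  also have "\<dots> = fact (m + k) * (real (m + k) + 1)"
    by (simp only: Suc.IH)
  also have "\<dots> = fact (m + Suc k)"
    by (simp add: algebra_simps)
  finally show ?case .
qed simp

lemma hyp1F1_one_of_nat_sums:
  "(\<lambda>k. fact m * z ^ k / fact (m + k)) sums hyp1F1 1 (real m + 1) z"
proof -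
  have bound: "\<bar>fact m * z ^ k / fact (m + k)\<bar> \<le> fact m * (inverse (fact k) * \<bar>z\<bar> ^ k)" for k
  proof -
    have "inverse (fact (m + k)) \<le> (inverse (fact k) :: real)"
      by (intro le_imp_inverse_le fact_mono) simp_all
    then have "\<bar>z\<bar> ^ k * inverse (fact (m + k)) \<le> \<bar>z\<bar> ^ k * inverse (fact k)"
      by (rule mult_left_mono) simp
    then show ?thesis
      by (simp add: abs_mult power_abs divide_inverse mult_ac)
  qed
  have "summable (\<lambda>k. fact m * (inverse (fact k) * \<bar>z\<bar> ^ k))"
    by (intro summable_mult summable_exp)
  then have "summable (\<lambda>k. fact m * z ^ k / fact (m + k))"
    by (rule summable_comparison_test') (use bound in simp)
  moreover have "pochhammer 1 k / pochhammer (real m + 1) k * z ^ k / fact k = fact m * z ^ k / fact (m + k)" for k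
    using pochhammer_of_nat_plus_one_mult_fact[of m k, symmetric]
    by (simp add: pochhammer_fact[symmetric] field_simps del: fact_Suc)
  ultimately show ?thesis
    by (simp add: hyp1F1_def summable_sums)
qed

lemma up_pmf_eq_hyp1F1: "up_pmf l x = l ^ x * exp (- l) / fact (x + 1) * hyp1F1 1 (real x + 2) l"
proof -
  define C where "C = l ^ x * exp (- l) / fact (x + 1)"
  have "(\<lambda>k. C * (fact (x + 1) * l ^ k / fact (x + 1 + k))) sums (C * hyp1F1 1 (real (x + 1) + 1) l)"
    by (intro sums_mult hyp1F1_one_of_nat_sums)
  moreover have "C * (fact (x + 1) * l ^ k / fact (x + 1 + k)) = poisson_pmf_real l (k + x) / real (k + x + 1)" for k
  proof -
    have "(fact (x + 1 + k) :: real) = real (k + x + 1) * fact (k + x)"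
      by (simp add: algebra_simps)
    then show ?thesis
      by (simp add: C_def poisson_pmf_real_def power_add field_simps del: fact_Suc of_nat_Suc of_nat_add)
  qed
  ultimately have "(\<lambda>k. if x \<le> k + x then poisson_pmf_real l (k + x) / real (k + x + 1) else 0) sums (C * hyp1F1 1 (real x + 2) l)"
    by (simp add: add_ac)
  then have "(\<lambda>n. if x \<le> n then poisson_pmf_real l n / real (n + 1) else 0) sums (C * hyp1F1 1 (real x + 2) l)"
    by (subst (asm) sums_zero_iff_shift) auto
  then show ?thesis
    by (simp add: up_pmf_def C_def sums_iff)
qed

lemma unb_pmf_tendsto_up_pmf:
  fixes p :: "real \<Rightarrow> real"
  assumes p: "\<forall>r>0. 0 < p r \<and> p r < 1"
    and odds_zero: "((\<lambda>r. (1 - p r) / p r) \<longlongrightarrow> 0) at_top"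
    and odds: "((\<lambda>r. r * ((1 - p r) / p r)) \<longlongrightarrow> l) at_top"
  shows "((\<lambda>r. unb_pmf r (p r) x) \<longlongrightarrow> up_pmf l x) at_top"
proof -
  define c where "c n = (if x \<le> n then 1 / real (n + 1) else 0)" for n
  have c_mult: "(if x \<le> n then w / real (n + 1) else 0) = c n * w" for n w
    by (simp add: c_def)
  have pos: "eventually (\<lambda>r::real. 0 < r) at_top"
    by (rule eventually_gt_at_top)
  have "((\<lambda>r. \<Sum>n. c n * negbin_pmf r (p r) n) \<longlongrightarrow> (\<Sum>n. c n * poisson_pmf_real l n)) at_top"
  proof (rule tendsto_bounded_weighted_suminf)
    show "eventually (\<lambda>r. \<forall>n. 0 \<le> negbin_pmf r (p r) n) at_top"
      using pos by eventually_elim (use p negbin_pmf_nonneg in auto)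
    show "eventually (\<lambda>r. negbin_pmf r (p r) sums 1) at_top"
      using pos by eventually_elim (use p negbin_pmf_sums in auto)
    show "((\<lambda>r. negbin_pmf r (p r) n) \<longlongrightarrow> poisson_pmf_real l n) at_top" for n
      using p odds_zero odds by (rule negbin_pmf_tendsto_poisson_pmf_real)
    show "\<bar>c n\<bar> \<le> 1" for n
      by (simp add: c_def)
  qed (rule poisson_pmf_real_sums)
  then show ?thesis
    unfolding unb_pmf_def up_pmf_def c_mult .
qed

theorem mainTheorem7:
  fixes l :: real and p :: "real \<Rightarrow> real" and x :: nat
  assumes "l > 0"
    and "\<forall>r>0. 0 < p r \<and> p r < 1"
    and "((\<lambda>r. (1 - p r) / p r) \<longlongrightarrow> 0) at_top"
    and "((\<lambda>r. r * ((1 - p r) / p r)) \<longlongrightarrow> l) at_top"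
  shows "((\<lambda>r. unb_pmf r (p r) x) \<longlongrightarrow>
            l ^ x * exp (- l) / fact (x + 1) * hyp1F1 1 (real x + 2) l) at_top
         \<and> l ^ x * exp (- l) / fact (x + 1) * hyp1F1 1 (real x + 2) l = up_pmf l x"
proof -
  have "l ^ x * exp (- l) / fact (x + 1) * hyp1F1 1 (real x + 2) l = up_pmf l x"
    by (rule up_pmf_eq_hyp1F1[symmetric])
  moreover have "((\<lambda>r. unb_pmf r (p r) x) \<longlongrightarrow> up_pmf l x) at_top"
    using assms(2-4) by (rule unb_pmf_tendsto_up_pmf)
  ultimately show ?thesis
    by simp
qed

end
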